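(* Let $(X,\nu_X)$ and $(Y,\nu_Y)$ be centered spaces with $\operatorname{card} Y\ge 2$, and fix $x\in X$. Let $C_x(X,Y)$ be the set of functions $X\to Y$ that are centered at $x$, and define the relation $\hat x$ on $C_x(X,Y)$ by: $f\,\hat x\,g$ if and only if there is $N\in\nu_X(x)$ with $N\subseteq\{z\in X\mid f(z)=g(z)\}$. Then $\nu_X(x)$ is a filterbase on $X$ if and only if $\hat x$ is a nontrivial equivalence relation on $C_x(X,Y)$.
   Context: A centered structure on a set $X$ assigns to each point $x\in X$ a collection $\nu(x)$ of subsets of $X$ such that $x\in N$ for every $N\in\nu(x)$; a set with a centered structure is a centered space. For collections $\mathcal P,\mathcal Q$ of subsets of a set, write $\mathcal P\preceq\mathcal Q$ if for every $Q\in\mathcal Q$ there is $P\in\mathcal P$ with $P\subseteq Q$. A function $f\colon X\to Y$ between centered spaces $(X,\nu_X)$, $(Y,\nu_Y)$ is centered at $x\in X$ if $\{f(N)\mid N\in\nu_X(x)\}\preceq\nu_Y(f(x))$, i.e. for each $M\in\nu_Y(f(x))$ there is $N\in\nu_X(x)$ with $f(N)\subseteq M$. A nonempty collection $\mathcal P$ of subsets of $X$ is a filterbase on $X$ if (F0) every finite intersection $A_1\cap\cdots\cap A_n$ ($n\ge1$) of members of $\mathcal P$ is nonempty and (F2) for all $A,B\in\mathcal P$ there is $C\in\mathcal P$ with $C\subseteq A\cap B$. An equivalence relation on a set $S$ is nontrivial if it is not the total relation $S\times S$. *)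

theory Defs
  imports Main
begin

definition centered_structure :: "'a set \<Rightarrow> ('a \<Rightarrow> 'a set set) \<Rightarrow> bool" where
  "centered_structure X \<nu> \<longleftrightarrow> (\<forall>x\<in>X. \<forall>N\<in>\<nu> x. N \<subseteq> X \<and> x \<in> N)"

definition coll_le :: "'a set set \<Rightarrow> 'a set set \<Rightarrow> bool" where
  "coll_le P Q \<longleftrightarrow> (\<forall>Q'\<in>Q. \<exists>P'\<in>P. P' \<subseteq> Q')"

definition centered_at :: "('a \<Rightarrow> 'a set set) \<Rightarrow> ('b \<Rightarrow> 'b set set) \<Rightarrow> ('a \<Rightarrow> 'b) \<Rightarrow> 'a \<Rightarrow> bool" where
  "centered_at \<nu>X \<nu>Y f x \<longleftrightarrow> coll_le ((\<lambda>N. f ` N) ` \<nu>X x) (\<nu>Y (f x))"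

definition filterbase_on :: "'a set \<Rightarrow> 'a set set \<Rightarrow> bool" where
  "filterbase_on X P \<longleftrightarrow> P \<noteq> {} \<and> (\<forall>A\<in>P. A \<subseteq> X)
     \<and> (\<forall>F. finite F \<and> F \<noteq> {} \<and> F \<subseteq> P \<longrightarrow> \<Inter>F \<noteq> {})
     \<and> (\<forall>A\<in>P. \<forall>B\<in>P. \<exists>C\<in>P. C \<subseteq> A \<inter> B)"

definition centered_funs :: "'a set \<Rightarrow> ('a \<Rightarrow> 'a set set) \<Rightarrow> 'b set \<Rightarrow> ('b \<Rightarrow> 'b set set) \<Rightarrow> 'a \<Rightarrow> ('a \<Rightarrow> 'b) set" where
  "centered_funs X \<nu>X Y \<nu>Y x =
     {f. (\<forall>z\<in>X. f z \<in> Y) \<and> (\<forall>z. z \<notin> X \<longrightarrow> f z = undefined) \<and> centered_at \<nu>X \<nu>Y f x}"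

definition xhat_rel :: "'a set \<Rightarrow> ('a \<Rightarrow> 'a set set) \<Rightarrow> 'b set \<Rightarrow> ('b \<Rightarrow> 'b set set) \<Rightarrow> 'a \<Rightarrow> (('a \<Rightarrow> 'b) \<times> ('a \<Rightarrow> 'b)) set" where
  "xhat_rel X \<nu>X Y \<nu>Y x =
     {(f, g). f \<in> centered_funs X \<nu>X Y \<nu>Y x \<and> g \<in> centered_funs X \<nu>X Y \<nu>Y x
        \<and> (\<exists>N\<in>\<nu>X x. N \<subseteq> {z\<in>X. f z = g z})}"

definition nontrivial_equiv :: "'c set \<Rightarrow> ('c \<times> 'c) set \<Rightarrow> bool" where
  "nontrivial_equiv S r \<longleftrightarrow> equiv S r \<and> r \<noteq> S \<times> S"

end

theory Submission
  imports Defs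
begin

text \<open>Condition (F0) is automatic because every member of \<open>\<nu>X x\<close> contains \<open>x\<close>; the relation
  is always symmetric, reflexive as soon as \<open>\<nu>X x \<noteq> {}\<close>, and transitive under (F2).
  For the converse, consider step functions equal to \<open>y1\<close> on a set \<open>S\<close> and to \<open>y2\<close> off it: such
  a function is centered at \<open>x\<close> once \<open>S\<close> contains a member of \<open>\<nu>X x\<close>, and two of them are
  related iff their sets agree on a member of \<open>\<nu>X x\<close>. Swapping \<open>y1\<close> and \<open>y2\<close> gives an unrelated
  pair, and applying transitivity twice, first to \<open>A\<close> and \<open>B\<close>, then to their agreement set and
  \<open>A \<union> B\<close>, gives a member of \<open>\<nu>X x\<close> inside \<open>A \<inter> B\<close>.\<close>

lemma centered_structureD:
  assumes "centered_structure X \<nu>" and "x \<in> X" and "N \<in> \<nu> x"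
  shows "N \<subseteq> X" and "x \<in> N"
  using assms unfolding centered_structure_def by auto

lemma filterbase_on_centered_iff:
  assumes "centered_structure X \<nu>" and "x \<in> X"
  shows "filterbase_on X (\<nu> x) \<longleftrightarrow>
         \<nu> x \<noteq> {} \<and> (\<forall>A\<in>\<nu> x. \<forall>B\<in>\<nu> x. \<exists>C\<in>\<nu> x. C \<subseteq> A \<inter> B)"
proof -
  have "x \<in> \<Inter>F" if "F \<subseteq> \<nu> x" for F
    using that centered_structureD(2)[OF assms] by blast
  then show ?thesis
    using centered_structureD(1)[OF assms] unfolding filterbase_on_def by blast
qed

definition step_fun :: "'a set \<Rightarrow> 'a set \<Rightarrow> 'b \<Rightarrow> 'b \<Rightarrow> 'a \<Rightarrow> 'b" where
  "step_fun X S y1 y2 = (\<lambda>z. if z \<in> X then if z \<in> S then y1 else y2 else undefined)"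

lemma step_fun_in_centered_funs:
  assumes cX: "centered_structure X \<nu>X" and cY: "centered_structure Y \<nu>Y"
    and "y1 \<in> Y" and "y2 \<in> Y" and xX: "x \<in> X"
    and N: "N \<in> \<nu>X x" "N \<subseteq> S"
  shows "step_fun X S y1 y2 \<in> centered_funs X \<nu>X Y \<nu>Y x"
proof -
  have "N \<subseteq> X" "x \<in> N" using centered_structureD[OF cX xX N(1)] by auto
  then have value_at_x: "step_fun X S y1 y2 x = y1"
    and image_N: "step_fun X S y1 y2 ` N = {y1}"
    using N(2) by (auto simp: step_fun_def)
  have "\<exists>P\<in>(\<lambda>N. step_fun X S y1 y2 ` N) ` \<nu>X x. P \<subseteq> M" if "M \<in> \<nu>Y y1" for M
  proof
    show "step_fun X S y1 y2 ` N \<in> (\<lambda>N. step_fun X S y1 y2 ` N) ` \<nu>X x"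
      using N(1) by (rule imageI)
    show "step_fun X S y1 y2 ` N \<subseteq> M"
      using image_N centered_structureD(2)[OF cY \<open>y1 \<in> Y\<close> that] by simp
  qed
  then have "centered_at \<nu>X \<nu>Y (step_fun X S y1 y2) x"
    unfolding centered_at_def coll_le_def value_at_x by blast
  moreover have "\<forall>z\<in>X. step_fun X S y1 y2 z \<in> Y"
    and "\<forall>z. z \<notin> X \<longrightarrow> step_fun X S y1 y2 z = undefined"
    using \<open>y1 \<in> Y\<close> \<open>y2 \<in> Y\<close> by (simp_all add: step_fun_def)
  ultimately show ?thesis
    unfolding centered_funs_def by blast
qed

lemma mem_xhat_rel_iff:
  "(f, g) \<in> xhat_rel X \<nu>X Y \<nu>Y x \<longleftrightarrow>
     f \<in> centered_funs X \<nu>X Y \<nu>Y x \<and> g \<in> centered_funs X \<nu>X Y \<nu>Y x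
     \<and> (\<exists>N\<in>\<nu>X x. N \<subseteq> {z\<in>X. f z = g z})"
  unfolding xhat_rel_def by simp

lemma xhat_rel_subset: "xhat_rel X \<nu>X Y \<nu>Y x \<subseteq> centered_funs X \<nu>X Y \<nu>Y x \<times> centered_funs X \<nu>X Y \<nu>Y x"
  unfolding xhat_rel_def by auto

lemma sym_xhat_rel: "sym (xhat_rel X \<nu>X Y \<nu>Y x)"
  unfolding xhat_rel_def by (rule symI) (auto simp: eq_commute)

lemma refl_on_xhat_rel:
  assumes "centered_structure X \<nu>X" and "x \<in> X" and "\<nu>X x \<noteq> {}"
  shows "refl_on (centered_funs X \<nu>X Y \<nu>Y x) (xhat_rel X \<nu>X Y \<nu>Y x)"
proof -
  obtain N where "N \<in> \<nu>X x" using assms(3) by blast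
  then show ?thesis
    using centered_structureD(1)[OF assms(1,2)] unfolding refl_on_def mem_xhat_rel_iff by blast
qed

lemma trans_xhat_rel:
  assumes "\<forall>A\<in>\<nu>X x. \<forall>B\<in>\<nu>X x. \<exists>C\<in>\<nu>X x. C \<subseteq> A \<inter> B"
  shows "trans (xhat_rel X \<nu>X Y \<nu>Y x)"
proof (rule transI)
  fix f g h
  assume "(f, g) \<in> xhat_rel X \<nu>X Y \<nu>Y x" and "(g, h) \<in> xhat_rel X \<nu>X Y \<nu>Y x"
  then obtain N1 N2 where "N1 \<in> \<nu>X x" "N1 \<subseteq> {z\<in>X. f z = g z}"
      and "N2 \<in> \<nu>X x" "N2 \<subseteq> {z\<in>X. g z = h z}"
      and fh: "f \<in> centered_funs X \<nu>X Y \<nu>Y x" "h \<in> centered_funs X \<nu>X Y \<nu>Y x"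
    unfolding mem_xhat_rel_iff by blast
  moreover obtain D where "D \<in> \<nu>X x" "D \<subseteq> N1 \<inter> N2"
    using assms \<open>N1 \<in> \<nu>X x\<close> \<open>N2 \<in> \<nu>X x\<close> by blast
  ultimately have "\<forall>z\<in>D. z \<in> X \<and> f z = g z \<and> g z = h z" by blast
  then have "D \<subseteq> {z\<in>X. f z = h z}" by auto
  then show "(f, h) \<in> xhat_rel X \<nu>X Y \<nu>Y x"
    unfolding mem_xhat_rel_iff using fh \<open>D \<in> \<nu>X x\<close> by blast
qed

lemma xhat_rel_nontrivial:
  assumes cX: "centered_structure X \<nu>X" and cY: "centered_structure Y \<nu>Y"
    and y: "y1 \<in> Y" "y2 \<in> Y" "y1 \<noteq> y2" and xX: "x \<in> X" and "\<nu>X x \<noteq> {}"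
  shows "xhat_rel X \<nu>X Y \<nu>Y x \<noteq> centered_funs X \<nu>X Y \<nu>Y x \<times> centered_funs X \<nu>X Y \<nu>Y x"
proof
  obtain N where N: "N \<in> \<nu>X x" using assms(7) by blast
  note N_sub = centered_structureD[OF cX xX N]
  assume "xhat_rel X \<nu>X Y \<nu>Y x = centered_funs X \<nu>X Y \<nu>Y x \<times> centered_funs X \<nu>X Y \<nu>Y x"
  moreover have "step_fun X X y1 y2 \<in> centered_funs X \<nu>X Y \<nu>Y x"
    and "step_fun X X y2 y1 \<in> centered_funs X \<nu>X Y \<nu>Y x"
    using step_fun_in_centered_funs[OF cX cY _ _ xX N] N_sub y by auto
  ultimately obtain M where "M \<in> \<nu>X x" "M \<subseteq> {z\<in>X. step_fun X X y1 y2 z = step_fun X X y2 y1 z}"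
    unfolding xhat_rel_def by blast
  then have "step_fun X X y1 y2 x = step_fun X X y2 y1 x"
    using centered_structureD(2)[OF cX xX] xX by blast
  then show False using xX y(3) by (simp add: step_fun_def)
qed

lemma equiv_xhat_rel_nonempty:
  assumes "equiv (centered_funs X \<nu>X Y \<nu>Y x) (xhat_rel X \<nu>X Y \<nu>Y x)"
    and "xhat_rel X \<nu>X Y \<nu>Y x \<noteq> centered_funs X \<nu>X Y \<nu>Y x \<times> centered_funs X \<nu>X Y \<nu>Y x"
  shows "\<nu>X x \<noteq> {}"
proof
  assume "\<nu>X x = {}"
  then have "xhat_rel X \<nu>X Y \<nu>Y x = {}" unfolding xhat_rel_def by auto
  with assms show False unfolding equiv_def refl_on_def by auto
qed

lemma step_funs_xhat_rel_iff:
  assumes cX: "centered_structure X \<nu>X" and cY: "centered_structure Y \<nu>Y"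
    and y: "y1 \<in> Y" "y2 \<in> Y" "y1 \<noteq> y2" and xX: "x \<in> X"
    and S: "N \<in> \<nu>X x" "N \<subseteq> S" and T: "M \<in> \<nu>X x" "M \<subseteq> T"
  shows "(step_fun X S y1 y2, step_fun X T y1 y2) \<in> xhat_rel X \<nu>X Y \<nu>Y x \<longleftrightarrow>
         (\<exists>D\<in>\<nu>X x. D \<subseteq> {z\<in>X. z \<in> S \<longleftrightarrow> z \<in> T})"
proof -
  have agree_set: "{z\<in>X. step_fun X S y1 y2 z = step_fun X T y1 y2 z} = {z\<in>X. z \<in> S \<longleftrightarrow> z \<in> T}"
    using y(3) by (auto simp: step_fun_def)
  have "step_fun X S y1 y2 \<in> centered_funs X \<nu>X Y \<nu>Y x"
    and "step_fun X T y1 y2 \<in> centered_funs X \<nu>X Y \<nu>Y x"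
    by (rule step_fun_in_centered_funs[OF cX cY y(1,2) xX S],
        rule step_fun_in_centered_funs[OF cX cY y(1,2) xX T])
  then show ?thesis
    unfolding mem_xhat_rel_iff agree_set by simp
qed

lemma trans_xhat_rel_step_funs_agree:
  assumes cX: "centered_structure X \<nu>X" and cY: "centered_structure Y \<nu>Y"
    and y: "y1 \<in> Y" "y2 \<in> Y" "y1 \<noteq> y2" and xX: "x \<in> X"
    and trans: "trans (xhat_rel X \<nu>X Y \<nu>Y x)"
    and S: "N \<in> \<nu>X x" "N \<subseteq> S" and T: "M \<in> \<nu>X x" "M \<subseteq> T"
  shows "\<exists>D\<in>\<nu>X x. D \<subseteq> {z\<in>X. z \<in> S \<longleftrightarrow> z \<in> T}"
proof -
  note related_iff = step_funs_xhat_rel_iff[OF cX cY y xX]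
  have NX: "N \<subseteq> X" and MX: "M \<subseteq> X" using centered_structureD(1)[OF cX xX] S(1) T(1) by auto
  have "(step_fun X S y1 y2, step_fun X X y1 y2) \<in> xhat_rel X \<nu>X Y \<nu>Y x"
    unfolding related_iff[OF S S(1) NX] using S NX by blast
  moreover have "(step_fun X X y1 y2, step_fun X T y1 y2) \<in> xhat_rel X \<nu>X Y \<nu>Y x"
    unfolding related_iff[OF T(1) MX T] using T MX by blast
  ultimately have "(step_fun X S y1 y2, step_fun X T y1 y2) \<in> xhat_rel X \<nu>X Y \<nu>Y x"
    by (rule transD[OF trans])
  then show ?thesis unfolding related_iff[OF S T] .
qed

lemma trans_xhat_rel_imp_inter:
  assumes cX: "centered_structure X \<nu>X" and cY: "centered_structure Y \<nu>Y"
    and y: "y1 \<in> Y" "y2 \<in> Y" "y1 \<noteq> y2" and xX: "x \<in> X"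
    and trans: "trans (xhat_rel X \<nu>X Y \<nu>Y x)"
    and A: "A \<in> \<nu>X x" and B: "B \<in> \<nu>X x"
  shows "\<exists>D\<in>\<nu>X x. D \<subseteq> A \<inter> B"
proof -
  note agree = trans_xhat_rel_step_funs_agree[OF cX cY y xX trans]
  define E where "E = {z\<in>X. z \<in> A \<longleftrightarrow> z \<in> B}"
  obtain N where "N \<in> \<nu>X x" "N \<subseteq> E"
    using agree[OF A order_refl B order_refl] unfolding E_def by blast
  then obtain D where "D \<in> \<nu>X x" "D \<subseteq> {z\<in>X. z \<in> E \<longleftrightarrow> z \<in> A \<union> B}"
    using agree[of N E A "A \<union> B"] A by blast
  moreover have "{z\<in>X. z \<in> E \<longleftrightarrow> z \<in> A \<union> B} \<subseteq> A \<inter> B"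
    unfolding E_def by blast
  ultimately show ?thesis by blast
qed

theorem mainTheorem3:
  fixes X :: "'a set" and Y :: "'b set"
    and \<nu>X :: "'a \<Rightarrow> 'a set set" and \<nu>Y :: "'b \<Rightarrow> 'b set set" and x :: 'a
  assumes "centered_structure X \<nu>X" and "centered_structure Y \<nu>Y"
    and "\<exists>y1\<in>Y. \<exists>y2\<in>Y. y1 \<noteq> y2"
    and "x \<in> X"
  shows "filterbase_on X (\<nu>X x) \<longleftrightarrow>
         nontrivial_equiv (centered_funs X \<nu>X Y \<nu>Y x) (xhat_rel X \<nu>X Y \<nu>Y x)"
proof -
  let ?C = "centered_funs X \<nu>X Y \<nu>Y x" and ?R = "xhat_rel X \<nu>X Y \<nu>Y x"
  obtain y1 y2 where y: "y1 \<in> Y" "y2 \<in> Y" "y1 \<noteq> y2" using assms(3) by blast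
  show ?thesis
    unfolding filterbase_on_centered_iff[OF assms(1,4)]
  proof
    assume "\<nu>X x \<noteq> {} \<and> (\<forall>A\<in>\<nu>X x. \<forall>B\<in>\<nu>X x. \<exists>C\<in>\<nu>X x. C \<subseteq> A \<inter> B)"
    then have ne: "\<nu>X x \<noteq> {}"
      and F2: "\<forall>A\<in>\<nu>X x. \<forall>B\<in>\<nu>X x. \<exists>C\<in>\<nu>X x. C \<subseteq> A \<inter> B" by blast+
    have "equiv ?C ?R"
      by (rule equivI[OF xhat_rel_subset refl_on_xhat_rel[OF assms(1,4) ne]
            sym_xhat_rel trans_xhat_rel[of \<nu>X x, OF F2]])
    with xhat_rel_nontrivial[OF assms(1,2) y assms(4) ne] show "nontrivial_equiv ?C ?R"
      unfolding nontrivial_equiv_def by blast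
  next
    assume "nontrivial_equiv ?C ?R"
    then have eq: "equiv ?C ?R" and nt: "?R \<noteq> ?C \<times> ?C"
      unfolding nontrivial_equiv_def by blast+
    from eq have "trans ?R" by (rule equivE)
    show "\<nu>X x \<noteq> {} \<and> (\<forall>A\<in>\<nu>X x. \<forall>B\<in>\<nu>X x. \<exists>C\<in>\<nu>X x. C \<subseteq> A \<inter> B)"
      using equiv_xhat_rel_nonempty[OF eq nt]
        trans_xhat_rel_imp_inter[OF assms(1,2) y assms(4) \<open>trans ?R\<close>] by blast
  qed
qed

end
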